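(* Let $\mathbf g=(g_1,\dots,g_s)$ and $J=\sqrt[\mathbb R]{\operatorname{supp}\mathcal Q(\mathbf g)}$. Let $\mathbf h=(h_1,\dots,h_m)$ be polynomials with $(\mathbf h)\subseteq J$ and $\deg h_i\le d$ for all $i$. Then there exists $k\ge d$ such that $$\mathcal L_k(\mathbf g)^{[d]}\subseteq\mathcal L_d(\mathbf g,\pm\mathbf h)\subseteq\mathcal L_d(\mathbf g).$$ In particular $\mathcal L_k(\mathbf g)^{[d]}\subseteq\mathcal L_d(\pm\mathbf h)$.
   Context: $\mathbb R[\mathbf X]=\mathbb R[X_1,\dots,X_n]$, $\mathbb R[\mathbf X]_t$ polynomials of degree $\le t$; $\Sigma^2$ sums of squares, $\Sigma^2_t=\Sigma^2\cap\mathbb R[\mathbf X]_t$. For a finite family $G$, $\mathcal Q_t(G)=\{s_0+\sum_{g\in G}s_gg:s_0\in\Sigma^2_t,s_g\in\Sigma^2,\deg s_g\le t-\deg g\}$, $\mathcal Q(G)=\bigcup_t\mathcal Q_t(G)$, $\mathcal L_t(G)=\{\sigma\in(\mathbb R[\mathbf X]_t)^*:\sigma\ge0\text{ on }\mathcal Q_t(G)\}$. $(\mathbf g,\pm\mathbf h)$ denotes the family $g_1,\dots,g_s,h_1,-h_1,\dots,h_m,-h_m$ and $\pm\mathbf h$ the family $h_1,-h_1,\dots,h_m,-h_m$. $\operatorname{supp}Q=Q\cap(-Q)$, $\sqrt[\mathbb R]{I}=\{p:\exists m', s\in\Sigma^2,\ p^{2m'}+s\in I\}$. For $\sigma\in(\mathbb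 R[\mathbf X]_k)^*$, $\sigma^{[d]}$ is its restriction to $\mathbb R[\mathbf X]_d$ and $B^{[d]}=\{\sigma^{[d]}:\sigma\in B\}$. *)

theory Defs
  imports Complex_Main "HOL-Library.Poly_Mapping"
begin

text \<open>Real polynomials in the variables indexed by a finite type 'v (so n = CARD('v)):
  finitely supported maps from monomials (exponent vectors 'v =>0 nat) to real coefficients.\<close>
type_synonym 'v mpoly = "('v \<Rightarrow>\<^sub>0 nat) \<Rightarrow>\<^sub>0 real"

definition mon_deg :: "('v \<Rightarrow>\<^sub>0 nat) \<Rightarrow> nat" where
  "mon_deg \<alpha> = (\<Sum>v\<in>Poly_Mapping.keys \<alpha>. Poly_Mapping.lookup \<alpha> v)"

text \<open>total degree (the zero polynomial gets degree 0)\<close>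
definition mdeg :: "'v mpoly \<Rightarrow> nat" where
  "mdeg p = Max (insert 0 (mon_deg ` Poly_Mapping.keys p))"

definition Pdeg :: "nat \<Rightarrow> 'v mpoly set" where
  "Pdeg t = {p. mdeg p \<le> t}"

definition smult_mp :: "real \<Rightarrow> 'v mpoly \<Rightarrow> 'v mpoly" where
  "smult_mp c p = Poly_Mapping.map (\<lambda>x. c * x) p"

definition sos :: "'v mpoly \<Rightarrow> bool" where
  "sos p \<longleftrightarrow> (\<exists>qs. p = sum_list (map (\<lambda>q. q * q) qs))"

text \<open>truncated quadratic module Q_t(G); the family G is a list;
  s_g = 0 is always allowed (deg 0 = -infinity)\<close>
definition Qt :: "nat \<Rightarrow> 'v mpoly list \<Rightarrow> 'v mpoly set" where
  "Qt t G = {s0 + (\<Sum>i<length G. s i * G ! i) | s0 s.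
      sos s0 \<and> mdeg s0 \<le> t \<and>
      (\<forall>i<length G. sos (s i) \<and> (s i = 0 \<or> mdeg (s i) + mdeg (G ! i) \<le> t))}"

definition QM :: "'v mpoly list \<Rightarrow> 'v mpoly set" where
  "QM G = (\<Union>t. Qt t G)"

definition supp :: "'v mpoly set \<Rightarrow> 'v mpoly set" where
  "supp Q = Q \<inter> uminus ` Q"

definition real_radical :: "'v mpoly set \<Rightarrow> 'v mpoly set" where
  "real_radical I = {p. \<exists>m s. sos s \<and> p ^ (2 * m) + s \<in> I}"

definition gen_ideal :: "'v mpoly list \<Rightarrow> 'v mpoly set" where
  "gen_ideal hs = {\<Sum>i<length hs. c i * hs ! i | c. True}"

definition pm :: "'v mpoly list \<Rightarrow> 'v mpoly list" where
  "pm hs = concat (map (\<lambda>h. [h, - h]) hs)"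

text \<open>(R[X]_t)^*: linear functionals on R[X]_t, represented canonically as
  functions that vanish outside R[X]_t\<close>
definition dual :: "nat \<Rightarrow> ('v mpoly \<Rightarrow> real) set" where
  "dual t = {\<sigma>. (\<forall>p\<in>Pdeg t. \<forall>q\<in>Pdeg t. \<sigma> (p + q) = \<sigma> p + \<sigma> q) \<and>
                 (\<forall>c. \<forall>p\<in>Pdeg t. \<sigma> (smult_mp c p) = c * \<sigma> p) \<and>
                 (\<forall>p. p \<notin> Pdeg t \<longrightarrow> \<sigma> p = 0)}"

definition Lt :: "nat \<Rightarrow> 'v mpoly list \<Rightarrow> ('v mpoly \<Rightarrow> real) set" where
  "Lt t G = {\<sigma> \<in> dual t. \<forall>q\<in>Qt t G. \<sigma> q \<ge> 0}"

definition restr :: "nat \<Rightarrow> ('v mpoly \<Rightarrow> real) \<Rightarrow> ('v mpoly \<Rightarrow> real)" where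
  "restr d \<sigma> = (\<lambda>p. if p \<in> Pdeg d then \<sigma> p else 0)"

end

theory Submission
  imports Defs
begin

text \<open>
  Let \<open>h\<close> lie in the real radical, say \<open>h^(2m) + s \<in> supp Q(g)\<close> with \<open>s\<close> a sum of squares.
  For \<open>k\<close> large, every \<open>\<sigma> \<in> L_k(g)\<close> vanishes on \<open>h^(2m) + s\<close>, and since \<open>\<sigma>\<close> is
  nonnegative on both summands, \<open>\<sigma>(h^(2m)) = 0\<close>. The bilinear form \<open>(p, q) \<mapsto> \<sigma>(p q)\<close>
  is positive semidefinite on polynomials of degree \<open>\<le> k/2\<close>, so by Cauchy-Schwarz
  \<open>\<sigma>(p^2) = 0\<close> forces \<open>\<sigma>(p q) = 0\<close>. Applied to \<open>p = h^n\<close> this halves the exponent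
  repeatedly, down to \<open>\<sigma>(h^2) = 0\<close>, and then \<open>\<sigma>(h q) = 0\<close> for all \<open>q\<close> of degree \<open>\<le> d\<close>.
  Hence \<open>\<sigma>\<close> does not see the \<open>\<plusminus>h\<close>-part of an element of \<open>Q_d(g, \<plusminus>h)\<close>, and is
  nonnegative on the remaining \<open>Q_d(g)\<close>-part.
\<close>

lemma mon_deg_add: "mon_deg ((a::('v::finite) \<Rightarrow>\<^sub>0 nat) + b) = mon_deg a + mon_deg b"
proof -
  have "mon_deg c = (\<Sum>v\<in>UNIV. Poly_Mapping.lookup c v)" for c :: "'v \<Rightarrow>\<^sub>0 nat"
    unfolding mon_deg_def by (rule sum.mono_neutral_left) (auto simp: in_keys_iff)
  then show ?thesis by (simp add: lookup_add sum.distrib)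
qed

lemma mdeg_le_iff: "mdeg p \<le> t \<longleftrightarrow> (\<forall>a\<in>Poly_Mapping.keys p. mon_deg a \<le> t)"
  unfolding mdeg_def by (subst Max_le_iff) auto

lemma mdeg_add: "mdeg (p + q) \<le> max (mdeg p) (mdeg q)"
  unfolding mdeg_le_iff using keys_add[of p q] mdeg_le_iff[of p] mdeg_le_iff[of q]
  by (metis Un_iff max.cobounded1 max.cobounded2 order_refl order_trans subsetD)

lemma mdeg_mult: "mdeg ((p::('v::finite) mpoly) * q) \<le> mdeg p + mdeg q"
  unfolding mdeg_le_iff
proof
  fix c assume "c \<in> Poly_Mapping.keys (p * q)"
  then obtain a b where "c = a + b" "a \<in> Poly_Mapping.keys p" "b \<in> Poly_Mapping.keys q"
    using keys_mult by blast
  then show "mon_deg c \<le> mdeg p + mdeg q"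
    using mdeg_le_iff[of p "mdeg p"] mdeg_le_iff[of q "mdeg q"] by (simp add: mon_deg_add add_mono)
qed

lemma mdeg_uminus [simp]: "mdeg (- p) = mdeg p"
  unfolding mdeg_def by simp

lemma mdeg_zero [simp]: "mdeg (0::('v::finite) mpoly) = 0"
  unfolding mdeg_def by simp

lemma mdeg_one [simp]: "mdeg (1::('v::finite) mpoly) = 0"
  unfolding mdeg_def by (simp add: mon_deg_def)

lemma smult_mp_conv_mult: "smult_mp c p = Poly_Mapping.single 0 c * p"
  unfolding smult_mp_def by (rule mult_map_scale_conv_mult)

lemma smult_mp_minus_one: "smult_mp (-1) p = - p"
  unfolding smult_mp_conv_mult by (metis mult_minus1 mult_minus_left single_one single_uminus)

lemma mdeg_smult_mp: "mdeg (smult_mp c (p::('v::finite) mpoly)) \<le> mdeg p"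
proof -
  have "mdeg (Poly_Mapping.single 0 c :: 'v mpoly) = 0" unfolding mdeg_def by (simp add: mon_deg_def)
  then show ?thesis using mdeg_mult[of "Poly_Mapping.single 0 c" p] by (simp add: smult_mp_conv_mult)
qed

lemma mdeg_power: "mdeg ((p::('v::finite) mpoly) ^ n) \<le> n * mdeg p"
proof (induction n)
  case (Suc n) then show ?case using mdeg_mult[of p "p ^ n"] by simp
qed simp

lemma mdeg_sum_le:
  assumes "finite I" "\<forall>i\<in>I. mdeg (f i :: ('v::finite) mpoly) \<le> k"
  shows "mdeg (\<Sum>i\<in>I. f i) \<le> k"
  using assms
proof (induction I rule: finite_induct)
  case (insert x F)
  then show ?case using mdeg_add[of "f x" "sum f F"] by auto
qed simp

lemma dual_add: "\<sigma> \<in> dual k \<Longrightarrow> mdeg p \<le> k \<Longrightarrow> mdeg q \<le> k \<Longrightarrow> \<sigma> (p + q) = \<sigma> p + \<sigma> q"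
  unfolding dual_def Pdeg_def by auto

lemma dual_smult_mp: "\<sigma> \<in> dual k \<Longrightarrow> mdeg p \<le> k \<Longrightarrow> \<sigma> (smult_mp c p) = c * \<sigma> p"
  unfolding dual_def Pdeg_def by auto

lemma dual_zero: "\<sigma> \<in> dual k \<Longrightarrow> \<sigma> (0::('v::finite) mpoly) = 0"
  using dual_add[of \<sigma> k 0 0] by simp

lemma dual_uminus: "\<sigma> \<in> dual k \<Longrightarrow> mdeg (p::('v::finite) mpoly) \<le> k \<Longrightarrow> \<sigma> (- p) = - \<sigma> p"
  using dual_smult_mp[of \<sigma> k p "-1"] by (simp add: smult_mp_minus_one)

lemma dual_sum:
  assumes "\<sigma> \<in> dual k" "finite I" "\<forall>i\<in>I. mdeg (f i :: ('v::finite) mpoly) \<le> k"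
  shows "\<sigma> (\<Sum>i\<in>I. f i) = (\<Sum>i\<in>I. \<sigma> (f i))"
  using assms(2,3)
proof (induction I rule: finite_induct)
  case (insert x F)
  then show ?case using dual_add[OF assms(1)] mdeg_sum_le[of F f k] by simp
qed (simp add: dual_zero[OF assms(1)])

lemma restr_dual:
  fixes \<sigma> :: "('v::finite) mpoly \<Rightarrow> real"
  assumes "\<sigma> \<in> dual k" "d \<le> k"
  shows "restr d \<sigma> \<in> dual d"
  unfolding dual_def
proof (intro CollectI conjI ballI allI impI)
  fix p q :: "'v mpoly" assume "p \<in> Pdeg d" "q \<in> Pdeg d"
  then show "restr d \<sigma> (p + q) = restr d \<sigma> p + restr d \<sigma> q"
    using mdeg_add[of p q] dual_add[OF assms(1), of p q] assms(2)
    unfolding restr_def Pdeg_def by auto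
next
  fix c and p :: "'v mpoly" assume "p \<in> Pdeg d"
  then show "restr d \<sigma> (smult_mp c p) = c * restr d \<sigma> p"
    using mdeg_smult_mp[of c p] dual_smult_mp[OF assms(1), of p c] assms(2)
    unfolding restr_def Pdeg_def by auto
qed (simp add: restr_def)

lemma sos_square: "sos (p * p)"
  unfolding sos_def by (rule exI[of _ "[p]"]) simp

lemma sos_zero: "sos 0"
  unfolding sos_def by (rule exI[of _ "[]"]) simp

lemma sos_in_Qt: "sos s \<Longrightarrow> mdeg s \<le> t \<Longrightarrow> s \<in> Qt t G"
  unfolding Qt_def by (rule CollectI, rule exI[of _ s], rule exI[of _ "\<lambda>_. 0"]) (simp add: sos_zero)

lemma Qt_mono: "t \<le> t' \<Longrightarrow> Qt t G \<subseteq> Qt t' G"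
  unfolding Qt_def by fastforce

lemma mdeg_le_of_Qt:
  assumes "x \<in> Qt t (G::('v::finite) mpoly list)"
  shows "mdeg x \<le> t"
proof -
  obtain s0 s where x: "x = s0 + (\<Sum>i<length G. s i * G ! i)" "mdeg s0 \<le> t"
    "\<forall>i<length G. s i = 0 \<or> mdeg (s i) + mdeg (G ! i) \<le> t"
    using assms unfolding Qt_def by blast
  have "mdeg (s i * G ! i) \<le> t" if "i < length G" for i
    using x(3) that mdeg_mult[of "s i" "G ! i"] by auto
  then have "mdeg (\<Sum>i<length G. s i * G ! i) \<le> t" by (intro mdeg_sum_le) auto
  then show ?thesis using x(1,2) mdeg_add[of s0 "\<Sum>i<length G. s i * G ! i"] by simp
qed

lemma sum_lessThan_append:
  "(\<Sum>i<length (A @ B). s i * (A @ B) ! i) =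
   (\<Sum>i<length A. s i * A ! i) + (\<Sum>j<length B. s (length A + j) * B ! j)"
  for A B :: "'a::semiring_0 list"
proof -
  have "(\<Sum>i<m + n. f i) = (\<Sum>i<m. f i) + (\<Sum>j<n. f (m + j))" for m n and f :: "nat \<Rightarrow> 'a"
    by (induction n) (auto simp: add.assoc)
  then show ?thesis by (simp add: nth_append)
qed

lemma Qt_append_left: "Qt d A \<subseteq> Qt d (A @ B)"
proof
  fix x assume "x \<in> Qt d A"
  then obtain s0 s where x: "x = s0 + (\<Sum>i<length A. s i * A ! i)" "sos s0" "mdeg s0 \<le> d"
    "\<forall>i<length A. sos (s i) \<and> (s i = 0 \<or> mdeg (s i) + mdeg (A ! i) \<le> d)"
    unfolding Qt_def by blast
  define s' where "s' i = (if i < length A then s i else 0)" for i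
  have "x = s0 + (\<Sum>i<length (A @ B). s' i * (A @ B) ! i)"
    by (subst sum_lessThan_append) (simp add: x(1) s'_def)
  moreover have "\<forall>i<length (A @ B). sos (s' i) \<and> (s' i = 0 \<or> mdeg (s' i) + mdeg ((A @ B) ! i) \<le> d)"
    using x(4) unfolding s'_def by (auto simp: sos_zero nth_append)
  ultimately show "x \<in> Qt d (A @ B)" unfolding Qt_def using x(2,3) by blast
qed

lemma Qt_append_right: "Qt d B \<subseteq> Qt d (A @ B)"
proof
  fix x assume "x \<in> Qt d B"
  then obtain s0 s where x: "x = s0 + (\<Sum>i<length B. s i * B ! i)" "sos s0" "mdeg s0 \<le> d"
    "\<forall>i<length B. sos (s i) \<and> (s i = 0 \<or> mdeg (s i) + mdeg (B ! i) \<le> d)"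
    unfolding Qt_def by blast
  define s' where "s' i = (if i < length A then 0 else s (i - length A))" for i
  have "x = s0 + (\<Sum>i<length (A @ B). s' i * (A @ B) ! i)"
    by (subst sum_lessThan_append) (simp add: x(1) s'_def)
  moreover have "\<forall>i<length (A @ B). sos (s' i) \<and> (s' i = 0 \<or> mdeg (s' i) + mdeg ((A @ B) ! i) \<le> d)"
    using x(4) unfolding s'_def by (auto simp: sos_zero nth_append)
  ultimately show "x \<in> Qt d (A @ B)" unfolding Qt_def using x(2,3) by blast
qed

lemma Qt_append_decompose:
  assumes "x \<in> Qt d (A @ B)"
  obtains a s where "a \<in> Qt d A" "x = a + (\<Sum>j<length B. s j * B ! j)"
    "\<forall>j<length B. s j = 0 \<or> mdeg (s j) + mdeg (B ! j) \<le> d"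
proof -
  obtain s0 s where x: "x = s0 + (\<Sum>i<length (A @ B). s i * (A @ B) ! i)" "sos s0" "mdeg s0 \<le> d"
    "\<forall>i<length (A @ B). sos (s i) \<and> (s i = 0 \<or> mdeg (s i) + mdeg ((A @ B) ! i) \<le> d)"
    using assms unfolding Qt_def by blast
  have "\<forall>i<length A. sos (s i) \<and> (s i = 0 \<or> mdeg (s i) + mdeg (A ! i) \<le> d)"
  proof (intro allI impI)
    fix i assume "i < length A"
    then show "sos (s i) \<and> (s i = 0 \<or> mdeg (s i) + mdeg (A ! i) \<le> d)"
      using x(4)[rule_format, of i] by (simp add: nth_append)
  qed
  then have "s0 + (\<Sum>i<length A. s i * A ! i) \<in> Qt d A"
    unfolding Qt_def using x(2,3) by blast
  moreover have "x = (s0 + (\<Sum>i<length A. s i * A ! i)) + (\<Sum>j<length B. s (length A + j) * B ! j)"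
    unfolding x(1) sum_lessThan_append by (simp add: add.assoc)
  moreover have "\<forall>j<length B. s (length A + j) = 0 \<or> mdeg (s (length A + j)) + mdeg (B ! j) \<le> d"
  proof (intro allI impI)
    fix j assume "j < length B"
    then show "s (length A + j) = 0 \<or> mdeg (s (length A + j)) + mdeg (B ! j) \<le> d"
      using x(4)[rule_format, of "length A + j"] by (simp add: nth_append)
  qed
  ultimately show ?thesis by (rule that)
qed

lemma Lt_antimono: "Qt d G \<subseteq> Qt d G' \<Longrightarrow> Lt d G' \<subseteq> Lt d G"
  unfolding Lt_def by blast

lemma Lt_nonneg_sos: "\<sigma> \<in> Lt k G \<Longrightarrow> sos s \<Longrightarrow> mdeg s \<le> k \<Longrightarrow> \<sigma> s \<ge> 0"
  unfolding Lt_def using sos_in_Qt by blast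

lemma nonneg_quadratic_linear_coeff_eq_0:
  fixes b c :: real
  assumes "\<And>l. 2 * l * b + l\<^sup>2 * c \<ge> 0" "c \<ge> 0"
  shows "b = 0"
proof -
  have "2 * (-b / (c + 1)) * b + (-b / (c + 1))\<^sup>2 * c \<ge> 0" by (rule assms(1))
  also have "2 * (-b / (c + 1)) * b + (-b / (c + 1))\<^sup>2 * c = -(b\<^sup>2 * (c + 2)) / (c + 1)\<^sup>2"
    using assms(2) by (simp add: field_simps power2_eq_square add_nonneg_eq_0_iff)
  finally have "b\<^sup>2 * (c + 2) \<le> 0"
    using assms(2) by (simp add: divide_le_0_iff)
  then show ?thesis using assms(2) by (smt (verit) mult_pos_pos zero_less_power2)
qed

lemma dual_square_expand:
  fixes p q :: "('v::finite) mpoly"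
  assumes "\<sigma> \<in> dual k" "mdeg p \<le> a" "mdeg q \<le> a" "2 * a \<le> k"
  shows "\<sigma> ((p + smult_mp l q) * (p + smult_mp l q))
           = \<sigma> (p * p) + 2 * l * \<sigma> (p * q) + l\<^sup>2 * \<sigma> (q * q)"
proof -
  have deg: "mdeg (u * v) \<le> k" if "mdeg u \<le> a" "mdeg v \<le> a" for u v :: "'v mpoly"
    using mdeg_mult[of u v] that assms(4) by linarith
  have pq: "mdeg (smult_mp (2 * l) (p * q)) \<le> k" and qq: "mdeg (smult_mp (l\<^sup>2) (q * q)) \<le> k"
    using mdeg_smult_mp deg assms(2,3) order_trans by blast+
  have "(p + smult_mp l q) * (p + smult_mp l q)
          = p * p + (smult_mp (2 * l) (p * q) + smult_mp (l\<^sup>2) (q * q))"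
  proof -
    let ?L = "Poly_Mapping.single 0 l :: 'v mpoly"
    have "Poly_Mapping.single 0 (2 * l) = ?L + ?L" unfolding mult_2 by (rule single_add)
    moreover have "Poly_Mapping.single 0 (l\<^sup>2) = ?L * ?L" by (simp add: power2_eq_square mult_single)
    ultimately show ?thesis unfolding smult_mp_conv_mult by (simp add: algebra_simps)
  qed
  moreover have "mdeg (smult_mp (2 * l) (p * q) + smult_mp (l\<^sup>2) (q * q)) \<le> k"
    using mdeg_add pq qq by (meson max.bounded_iff order_trans)
  ultimately show ?thesis
    using assms deg pq qq by (simp add: dual_add dual_smult_mp)
qed

lemma Lt_mult_eq_0_if_square_eq_0:
  fixes p q :: "('v::finite) mpoly"
  assumes \<sigma>: "\<sigma> \<in> Lt k G" and deg: "mdeg p \<le> a" "mdeg q \<le> a" "2 * a \<le> k"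
    and square: "\<sigma> (p * p) = 0"
  shows "\<sigma> (p * q) = 0"
proof (rule nonneg_quadratic_linear_coeff_eq_0)
  have dual: "\<sigma> \<in> dual k" using \<sigma> unfolding Lt_def by simp
  have deg_sq: "mdeg (u * u) \<le> k" if "mdeg u \<le> a" for u :: "'v mpoly"
    using mdeg_mult[of u u] that deg(3) by linarith
  show "\<sigma> (q * q) \<ge> 0" using Lt_nonneg_sos[OF \<sigma> sos_square deg_sq[OF deg(2)]] .
  fix l :: real
  have "mdeg (p + smult_mp l q) \<le> a"
    using mdeg_add[of p] mdeg_smult_mp[of l q] deg(1,2) by (meson max.bounded_iff order_trans)
  then have "\<sigma> ((p + smult_mp l q) * (p + smult_mp l q)) \<ge> 0"
    using Lt_nonneg_sos[OF \<sigma> sos_square] deg_sq by blast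
  then show "2 * l * \<sigma> (p * q) + l\<^sup>2 * \<sigma> (q * q) \<ge> 0"
    using dual_square_expand[OF dual deg, of l] square by simp
qed

text \<open>Each step passes from \<open>h^(2n)\<close> to \<open>h^n \<cdot> h^(2j-n) = h^(2j)\<close> with \<open>j = \<lceil>n/2\<rceil>\<close>.\<close>

lemma Lt_square_eq_0_if_even_power_eq_0:
  fixes h :: "('v::finite) mpoly"
  assumes \<sigma>: "\<sigma> \<in> Lt k G"
  shows "n \<ge> 1 \<Longrightarrow> \<sigma> (h ^ (2 * n)) = 0 \<Longrightarrow> 2 * n * mdeg h \<le> k \<Longrightarrow> \<sigma> (h * h) = 0"
proof (induction n rule: less_induct)
  case (less n)
  have hn: "h ^ (2 * n) = h ^ n * h ^ n" by (metis mult_2 power_add)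
  show ?case
  proof (cases "n = 1")
    case True then show ?thesis using less.prems(2) hn by simp
  next
    case False
    define j where "j = (n + 1) div 2"
    have j: "1 \<le> j" "j < n" "n \<le> 2 * j" "2 * j - n \<le> n"
      using False less.prems(1) unfolding j_def by auto
    have "\<sigma> (h ^ n * h ^ (2 * j - n)) = 0"
    proof (rule Lt_mult_eq_0_if_square_eq_0[OF \<sigma>])
      show "mdeg (h ^ n) \<le> n * mdeg h" by (rule mdeg_power)
      show "mdeg (h ^ (2 * j - n)) \<le> n * mdeg h"
        using mdeg_power[of h "2 * j - n"] mult_le_mono1[OF j(4)] by (meson order_trans)
      show "2 * (n * mdeg h) \<le> k" using less.prems(3) by (simp add: mult.assoc)
    qed (use less.prems(2) hn in simp)
    moreover have "h ^ n * h ^ (2 * j - n) = h ^ (2 * j)"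
      using j(3) by (metis le_add_diff_inverse power_add)
    moreover have "2 * j * mdeg h \<le> k"
      using less.prems(3) j(2) by (meson le_trans less_imp_le_nat mult_le_mono1 mult_le_mono2)
    ultimately show ?thesis using less.IH[OF j(2) j(1)] by simp
  qed
qed

lemma Lt_vanishes_on_supp_QM:
  assumes "x \<in> supp (QM (G::('v::finite) mpoly list))"
  shows "\<forall>\<^sub>F k in sequentially. \<forall>\<sigma>\<in>Lt k G. \<sigma> x = 0"
proof -
  obtain t1 t2 where t: "x \<in> Qt t1 G" "- x \<in> Qt t2 G"
    using assms unfolding supp_def QM_def by force
  have "\<sigma> x = 0" if k: "max t1 t2 \<le> k" and \<sigma>: "\<sigma> \<in> Lt k G" for k \<sigma>
  proof -
    have "x \<in> Qt k G" "- x \<in> Qt k G" using t k Qt_mono by fastforce+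
    then have "\<sigma> x \<ge> 0" "\<sigma> (- x) \<ge> 0" using \<sigma> unfolding Lt_def by auto
    moreover have "\<sigma> (- x) = - \<sigma> x"
      using dual_uminus \<sigma> mdeg_le_of_Qt[OF \<open>x \<in> Qt k G\<close>] unfolding Lt_def by blast
    ultimately show ?thesis by simp
  qed
  then show ?thesis unfolding eventually_sequentially by blast
qed

lemma Lt_annihilates_real_radical:
  fixes h :: "('v::finite) mpoly"
  assumes "h \<in> real_radical (supp (QM G))"
  shows "\<forall>\<^sub>F k in sequentially. \<forall>\<sigma>\<in>Lt k G. \<forall>q. mdeg q \<le> d \<longrightarrow> \<sigma> (h * q) = 0"
proof -
  obtain m s where s: "sos s" and supp: "h ^ (2 * m) + s \<in> supp (QM G)"
    using assms unfolding real_radical_def by blast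
  define a where "a = (m + 2) * mdeg h + d"
  have deg_h: "mdeg h \<le> a" "mdeg (h * h) \<le> a" "2 * m * mdeg h \<le> 2 * a"
    using mdeg_mult[of h h] unfolding a_def by (simp_all add: add_mult_distrib)
  have "\<forall>\<^sub>F k in sequentially. max (mdeg s) (2 * a) \<le> k"
    by (rule eventually_ge_at_top)
  with Lt_vanishes_on_supp_QM[OF supp] show ?thesis
  proof eventually_elim
    case (elim k)
    show ?case
    proof (intro ballI allI impI)
      fix \<sigma> q assume \<sigma>: "\<sigma> \<in> Lt k G" and q: "mdeg (q::'v mpoly) \<le> d"
      have ka: "2 * a \<le> k" and ks: "mdeg s \<le> k" using elim(2) by auto
      have hm: "mdeg (h ^ (2 * m)) \<le> k"
        using mdeg_power[of h "2 * m"] deg_h(3) ka by linarith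
      have "\<sigma> (h ^ (2 * m)) + \<sigma> s = \<sigma> (h ^ (2 * m) + s)"
        using \<sigma> dual_add[OF _ hm ks] unfolding Lt_def by simp
      also have "\<dots> = 0" using elim(1) \<sigma> by blast
      finally have "\<sigma> (h ^ (2 * m)) + \<sigma> s = 0" .
      moreover have "\<sigma> (h ^ (2 * m)) \<ge> 0"
        using Lt_nonneg_sos[OF \<sigma> sos_square[of "h ^ m"]] hm by (simp add: mult_2 power_add)
      moreover have "\<sigma> s \<ge> 0" using Lt_nonneg_sos[OF \<sigma> s ks] .
      ultimately have h2m: "\<sigma> (h ^ (2 * m)) = 0" by linarith
      have hh: "\<sigma> (h * h) = 0"
      proof (cases "m = 0")
        case True
        then have "\<sigma> (1 * 1) = 0" using h2m by simp
        then show ?thesis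
          using Lt_mult_eq_0_if_square_eq_0[OF \<sigma> _ deg_h(2) ka, of 1] by simp
      next
        case False
        show ?thesis
          by (rule Lt_square_eq_0_if_even_power_eq_0[OF \<sigma>, of m])
            (use False h2m deg_h(3) ka in simp_all)
      qed
      show "\<sigma> (h * q) = 0"
        using Lt_mult_eq_0_if_square_eq_0[OF \<sigma> deg_h(1) _ ka hh] q unfolding a_def by simp
    qed
  qed
qed

lemma generator_in_gen_ideal: "h \<in> set hs \<Longrightarrow> h \<in> gen_ideal hs"
proof -
  assume "h \<in> set hs"
  then obtain i where i: "i < length hs" "h = hs ! i" by (auto simp: in_set_conv_nth)
  then show ?thesis
    unfolding gen_ideal_def by (intro CollectI exI[of _ "\<lambda>j. of_bool (j = i)"]) simp
qed

lemma set_pm: "set (pm hs) = set hs \<union> uminus ` set hs"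
  unfolding pm_def by auto

lemma restr_Lt_subset_Lt_append_pm:
  fixes G hs :: "('v::finite) mpoly list"
  assumes k: "d \<le> k"
    and annihilate: "\<forall>h\<in>set hs. \<forall>\<sigma>\<in>Lt k G. \<forall>q. mdeg q \<le> d \<longrightarrow> \<sigma> (h * q) = 0"
  shows "restr d ` Lt k G \<subseteq> Lt d (G @ pm hs)"
proof (rule image_subsetI)
  fix \<sigma> assume \<sigma>: "\<sigma> \<in> Lt k G"
  have dual: "\<sigma> \<in> dual k" using \<sigma> unfolding Lt_def by simp
  have "restr d \<sigma> x \<ge> 0" if x: "x \<in> Qt d (G @ pm hs)" for x
  proof -
    obtain a s where a: "a \<in> Qt d G" and xa: "x = a + (\<Sum>j<length (pm hs). s j * pm hs ! j)"
      and s: "\<forall>j<length (pm hs). s j = 0 \<or> mdeg (s j) + mdeg (pm hs ! j) \<le> d"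
      by (rule Qt_append_decompose[OF x])
    have summand: "\<sigma> (s j * pm hs ! j) = 0 \<and> mdeg (s j * pm hs ! j) \<le> k"
      if j: "j < length (pm hs)" for j
    proof (cases "s j = 0")
      case True then show ?thesis using dual_zero[OF dual] by simp
    next
      case False
      then have deg: "mdeg (s j) + mdeg (pm hs ! j) \<le> d" using s j by blast
      obtain h where h: "h \<in> set hs" "pm hs ! j = h \<or> pm hs ! j = - h"
        using nth_mem[OF j] unfolding set_pm by blast
      then have "s j * pm hs ! j = h * s j \<or> s j * pm hs ! j = h * (- s j)"
        by (auto simp: mult.commute)
      moreover have "\<sigma> (h * u) = 0" if "mdeg u \<le> d" for u
        using annihilate h(1) \<sigma> that by blast
      ultimately have "\<sigma> (s j * pm hs ! j) = 0"
        using deg by (metis le_add1 order_trans mdeg_uminus)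
      moreover have "mdeg (s j * pm hs ! j) \<le> k"
        using mdeg_mult[of "s j" "pm hs ! j"] deg k by linarith
      ultimately show ?thesis by simp
    qed
    have "mdeg a \<le> k" using mdeg_le_of_Qt[OF a] k by simp
    moreover have "mdeg (\<Sum>j<length (pm hs). s j * pm hs ! j) \<le> k"
      using summand by (intro mdeg_sum_le) auto
    moreover have "\<sigma> (\<Sum>j<length (pm hs). s j * pm hs ! j) = 0"
      using summand dual_sum[OF dual, of "{..<length (pm hs)}"] by simp
    ultimately have "\<sigma> x = \<sigma> a" unfolding xa using dual_add[OF dual] by simp
    moreover have "\<sigma> a \<ge> 0" using \<sigma> a Qt_mono[OF k] unfolding Lt_def by blast
    ultimately show ?thesis unfolding restr_def by simp
  qed
  then show "restr d \<sigma> \<in> Lt d (G @ pm hs)"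
    using restr_dual[OF dual k] unfolding Lt_def by blast
qed

theorem mainTheorem13:
  fixes gs hs :: "('v::finite) mpoly list" and d :: nat
  assumes "gen_ideal hs \<subseteq> real_radical (supp (QM gs))"
    and "\<forall>h\<in>set hs. mdeg h \<le> d"
  shows "\<exists>k\<ge>d. restr d ` Lt k gs \<subseteq> Lt d (gs @ pm hs)
              \<and> Lt d (gs @ pm hs) \<subseteq> Lt d gs
              \<and> restr d ` Lt k gs \<subseteq> Lt d (pm hs)"
proof -
  have "\<forall>\<^sub>F k in sequentially. \<forall>h\<in>set hs. \<forall>\<sigma>\<in>Lt k gs. \<forall>q. mdeg q \<le> d \<longrightarrow> \<sigma> (h * q) = 0"
    using Lt_annihilates_real_radical generator_in_gen_ideal assms(1)
    by (intro eventually_ball_finite) blast+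
  then obtain K where K: "\<forall>k\<ge>K. \<forall>h\<in>set hs. \<forall>\<sigma>\<in>Lt k gs. \<forall>q. mdeg q \<le> d \<longrightarrow> \<sigma> (h * q) = 0"
    unfolding eventually_sequentially by blast
  define k where "k = max K d"
  have "\<forall>h\<in>set hs. \<forall>\<sigma>\<in>Lt k gs. \<forall>q. mdeg q \<le> d \<longrightarrow> \<sigma> (h * q) = 0"
    using K unfolding k_def by (meson max.cobounded1)
  then have "restr d ` Lt k gs \<subseteq> Lt d (gs @ pm hs)"
    unfolding k_def by (intro restr_Lt_subset_Lt_append_pm) auto
  moreover have "Lt d (gs @ pm hs) \<subseteq> Lt d gs" by (rule Lt_antimono[OF Qt_append_left])
  moreover have "Lt d (gs @ pm hs) \<subseteq> Lt d (pm hs)" by (rule Lt_antimono[OF Qt_append_right])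
  ultimately show ?thesis unfolding k_def by (meson max.cobounded2 order_trans)
qed

end
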